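(* Let $b>0$ and $c>0$, and let $A(b,c)>0$ and $B(b,c)>0$ be defined by $2A(b,c)^2=\sqrt{b^4+c^2}+b^2$ and $2B(b,c)^2=\sqrt{b^4+c^2}-b^2$. Then $$\sum_{n\ge1}\chi(n)\frac{n}{(n^2+b^2)^2+c^2}=\frac{\pi}{4c}\,\frac{\sinh(\frac{\pi}{2}A(b,c))\sin(\frac{\pi}{2}B(b,c))}{\sinh^2(\frac{\pi}{2} A(b,c))+\cos^{2}(\frac{\pi}{2}B(b,c))},$$ $$\sum_{n\ge1}\chi(n)\frac{n(n^2+b^2)}{(n^2+b^2)^2+c^2}=\frac{\pi}{4}\,\frac{\cosh(\frac{\pi}{2}A(b,c))\cos(\frac{\pi}{2}B(b,c))}{\cosh^2(\frac{\pi}{2} A(b,c))-\sin^{2}(\frac{\pi}{2}B(b,c))}.$$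
   Context: The function $\chi$ on integers is $\chi(n)=0$ if $n$ is even, $\chi(n)=1$ if $n\equiv1\pmod 4$, and $\chi(n)=-1$ if $n\equiv 3\pmod 4$. *)

theory Defs
  imports "HOL-Analysis.Analysis"
begin

definition chi :: "int \<Rightarrow> int" where
  "chi n = (if even n then 0 else if n mod 4 = 1 then 1 else -1)"

definition Afun :: "real \<Rightarrow> real \<Rightarrow> real" where
  "Afun b c = sqrt ((sqrt (b^4 + c^2) + b^2) / 2)"

definition Bfun :: "real \<Rightarrow> real \<Rightarrow> real" where
  "Bfun b c = sqrt ((sqrt (b^4 + c^2) - b^2) / 2)"

end

theory Submission
  imports Defs "HOL-Real_Asymp.Real_Asymp" "HOL-Probability.Characteristic_Functions"
begin

text \<open>
  Both series are the real and imaginary parts of the single complex series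
  \<open>\<Sum> \<chi>(n) n / (n\<^sup>2 - u\<^sup>2)\<close> with \<open>u = B - iA\<close>, for which \<open>n\<^sup>2 - u\<^sup>2 = (n\<^sup>2 + b\<^sup>2) + ic\<close>.
  Splitting \<open>n/(n\<^sup>2 - u\<^sup>2)\<close> into partial fractions and grouping the terms
  by residue mod 4 turns this series into two differences of digamma values,
  \<open>\<psi>(1 - x) - \<psi>(x)\<close> with \<open>x = (1 \<plusminus> u)/4\<close>; the reflection formula
  evaluates them as cotangents, and their sum is \<open>\<pi> / (4 cos (\<pi>u/2))\<close>.
  Separating real and imaginary parts of \<open>cos (\<pi>u/2)\<close> gives the two formulas.
\<close>

lemma Digamma_reflection_complex:
  fixes z :: complex
  assumes "z \<notin> \<int>"
  shows "Digamma (1 - z) - Digamma z = of_real pi * cot (of_real pi * z)"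
proof -
  have nonpos: "z \<notin> \<int>\<^sub>\<le>\<^sub>0" "1 - z \<notin> \<int>\<^sub>\<le>\<^sub>0"
    using assms nonpos_Ints_subset_Ints Ints_diff[OF Ints_1, of "1 - z"] by auto
  have sin_nz: "sin (of_real pi * z) \<noteq> 0"
    using assms by (auto simp: sin_eq_0 field_simps)
  have "((\<lambda>t. Gamma t * Gamma (1 - t)) has_field_derivative
          Gamma z * Gamma (1 - z) * (Digamma z - Digamma (1 - z))) (at z)"
    using nonpos by (auto intro!: derivative_eq_intros simp: algebra_simps)
  moreover have "((\<lambda>t. of_real pi / sin (of_real pi * t)) has_field_derivative
          - of_real pi * (of_real pi * cos (of_real pi * z)) / sin (of_real pi * z) ^ 2) (at z)"
    using sin_nz by (auto intro!: derivative_eq_intros simp: power2_eq_square)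
  ultimately have deriv_eq: "of_real pi / sin (of_real pi * z) * (Digamma z - Digamma (1 - z))
      = - of_real pi * (of_real pi * cos (of_real pi * z)) / sin (of_real pi * z) ^ 2"
    unfolding Gamma_reflection_complex by (rule DERIV_unique)
  have "Digamma (1 - z) - Digamma z
      = - (sin (of_real pi * z) / of_real pi * (of_real pi / sin (of_real pi * z) * (Digamma z - Digamma (1 - z))))"
    using sin_nz by simp
  also have "\<dots> = of_real pi * cot (of_real pi * z)"
    unfolding deriv_eq using sin_nz by (simp add: cot_def field_simps power2_eq_square)
  finally show ?thesis .
qed

lemma sums_inverse_diff_Digamma:
  fixes x y :: complex
  assumes "x \<noteq> 0" "y \<noteq> 0"
  shows "(\<lambda>j. inverse (of_nat j + x) - inverse (of_nat j + y)) sums (Digamma y - Digamma x)"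
proof -
  have "(\<lambda>n. inverse (of_nat (Suc n)) - inverse (w + of_nat n)) sums (Digamma w + euler_mascheroni)"
    if "w \<noteq> 0" for w :: complex
    using summable_Digamma[OF that] by (simp add: Digamma_def summable_sums)
  from sums_diff[OF this[OF assms(2)] this[OF assms(1)]] show ?thesis
    by (simp add: add.commute)
qed

lemma cot_add_tan:
  fixes x :: "'a::{real_normed_field,banach}"
  assumes "sin x \<noteq> 0" "cos x \<noteq> 0"
  shows "cot x + tan x = 2 / sin (2 * x)"
  unfolding sin_double using assms
  by (simp add: cot_def tan_def field_simps power2_eq_square sin_squared_eq)

lemma div_diff_squares_eq:
  fixes n u :: "'a::field_char_0"
  assumes "n + u \<noteq> 0" "n - u \<noteq> 0"
  shows "n / (n^2 - u^2) = (inverse (n + u) + inverse (n - u)) / 2"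
proof -
  have "n^2 - u^2 = (n + u) * (n - u)" by (simp add: power2_eq_square algebra_simps)
  then have "n / (n^2 - u^2) = n / ((n + u) * (n - u))" by simp
  also have "\<dots> = (inverse (n + u) + inverse (n - u)) / 2"
    using assms by (simp add: divide_simps)
  finally show ?thesis .
qed

lemma tendsto_of_nat_div_diff_squares:
  fixes u :: complex
  shows "(\<lambda>n. of_nat n / (of_nat n ^ 2 - u^2)) \<longlonglongrightarrow> 0"
proof (rule Lim_null_comparison)
  show "(\<lambda>n. real n / (real n ^ 2 - norm u ^ 2)) \<longlonglongrightarrow> 0" by real_asymp
  show "\<forall>\<^sub>F n in sequentially. norm (of_nat n / (of_nat n ^ 2 - u^2)) \<le> real n / (real n ^ 2 - norm u ^ 2)"
  proof -
    have "\<forall>\<^sub>F n in sequentially. norm u ^ 2 < real n ^ 2" by real_asymp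
    then show ?thesis
    proof eventually_elim
      case (elim n)
      have "real n ^ 2 - norm u ^ 2 \<le> norm (of_nat n ^ 2 - u^2 :: complex)"
        using norm_triangle_ineq2[of "of_nat n ^ 2 :: complex" "u^2"] by (simp add: norm_power)
      moreover have "0 < real n ^ 2 - norm u ^ 2"
        using elim by simp
      ultimately have "real n / norm (of_nat n ^ 2 - u^2 :: complex) \<le> real n / (real n ^ 2 - norm u ^ 2)"
        by (intro divide_left_mono mult_pos_pos; linarith)
      then show ?case
        by (simp add: norm_divide)
    qed
  qed
qed

lemma sums_of_pair_sums:
  fixes f :: "nat \<Rightarrow> 'a::real_normed_vector"
  assumes "f \<longlonglongrightarrow> 0" and "(\<lambda>j. f (2*j) + f (2*j+1)) sums S"
  shows "f sums S"
  unfolding sums_def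
proof (rule limseq_even_odd)
  have "(\<Sum>i<2*j. f i) = (\<Sum>i<j. f (2*i) + f (2*i+1))" for j
    by (induction j) (simp_all add: algebra_simps)
  with assms(2) show even: "(\<lambda>j. \<Sum>i<2*j. f i) \<longlonglongrightarrow> S"
    by (simp add: sums_def)
  have "(\<lambda>j. f (2*j)) \<longlonglongrightarrow> 0"
    by (rule LIMSEQ_subseq_LIMSEQ[OF assms(1), unfolded o_def]) (auto simp: strict_mono_def)
  from tendsto_add[OF even this] show "(\<lambda>j. \<Sum>i<2*j+1. f i) \<longlonglongrightarrow> S"
    by simp
qed

lemma sin_cos_pi_times_nonzero:
  fixes z :: complex
  assumes "Im z \<noteq> 0"
  shows "sin (of_real pi * z) \<noteq> 0" "cos (of_real pi * z) \<noteq> 0"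
proof -
  have "Im (of_real pi * z) \<noteq> 0"
    using assms by simp
  then show "sin (of_real pi * z) \<noteq> 0" "cos (of_real pi * z) \<noteq> 0"
    by (auto simp: sin_eq_0 cos_eq_0 dest: arg_cong[where f = Im])
qed

lemma sums_odd_alternating_div_diff_squares:
  fixes u :: complex
  assumes u: "Im u \<noteq> 0"
  shows "(\<lambda>j. of_nat (4*j+1) / (of_nat (4*j+1) ^ 2 - u^2) - of_nat (4*j+3) / (of_nat (4*j+3) ^ 2 - u^2))
           sums (of_real pi / (4 * cos (of_real pi * u / 2)))"
proof -
  define x where "x = (1 + u) / 4"
  define y where "y = (1 - u) / 4"
  have Im: "Im x \<noteq> 0" "Im y \<noteq> 0" "Im (1 - x) \<noteq> 0" "Im (1 - y) \<noteq> 0"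
    using u by (simp_all add: x_def y_def)
  then have nonzero: "x \<noteq> 0" "y \<noteq> 0" "1 - x \<noteq> 0" "1 - y \<noteq> 0"
    by auto
  have not_Int: "x \<notin> \<int>" "y \<notin> \<int>"
    using Im by (auto elim!: Ints_cases)
  have "(\<lambda>j. (inverse (of_nat j + x) - inverse (of_nat j + (1 - x)))
            + (inverse (of_nat j + y) - inverse (of_nat j + (1 - y))))
        sums ((Digamma (1 - x) - Digamma x) + (Digamma (1 - y) - Digamma y))"
    by (intro sums_add sums_inverse_diff_Digamma nonzero)
  then have "(\<lambda>j. (inverse (of_nat j + x) - inverse (of_nat j + (1 - x)))
            + (inverse (of_nat j + y) - inverse (of_nat j + (1 - y))))
        sums (of_real pi * (cot (of_real pi * x) + cot (of_real pi * y)))"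
    unfolding Digamma_reflection_complex[OF not_Int(1)] Digamma_reflection_complex[OF not_Int(2)]
    by (simp only: distrib_left)
  moreover have "(inverse (of_nat j + x) - inverse (of_nat j + (1 - x)))
            + (inverse (of_nat j + y) - inverse (of_nat j + (1 - y)))
      = 8 * (of_nat (4*j+1) / (of_nat (4*j+1) ^ 2 - u^2) - of_nat (4*j+3) / (of_nat (4*j+3) ^ 2 - u^2))"
    for j
  proof -
    have ne: "(of_nat m :: complex) + u \<noteq> 0" "(of_nat m :: complex) - u \<noteq> 0" for m
      using u by (auto dest: arg_cong[where f = Im])
    have quarter: "of_nat j + x = (of_nat (4*j+1) + u) / 4" "of_nat j + y = (of_nat (4*j+1) - u) / 4"
        "of_nat j + (1 - y) = (of_nat (4*j+3) + u) / 4" "of_nat j + (1 - x) = (of_nat (4*j+3) - u) / 4"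
      by (simp_all add: x_def y_def field_simps)
    have regroup: "inverse (p/4) - inverse (q/4) + (inverse (r/4) - inverse (s/4))
        = 8 * ((inverse p + inverse r) / 2 - (inverse s + inverse q) / 2)" for p q r s :: complex
      unfolding divide_inverse inverse_mult_distrib inverse_inverse_eq by algebra
    show ?thesis
      unfolding quarter div_diff_squares_eq[OF ne] by (rule regroup)
  qed
  moreover have "cot (of_real pi * x) + cot (of_real pi * y) = 2 / cos (of_real pi * u / 2)"
  proof -
    have "of_real pi * y = of_real pi / 2 - of_real pi * x"
      by (simp add: x_def y_def field_simps)
    then have "cot (of_real pi * y) = tan (of_real pi * x)"
      by (simp add: cot_def tan_def flip: sin_cos_eq cos_sin_eq)
    moreover have "sin (2 * (of_real pi * x)) = cos (- (of_real pi * u / 2))"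
    proof -
      have "2 * (of_real pi * x) = of_real pi / 2 - (- (of_real pi * u / 2))"
        by (simp add: x_def field_simps)
      then show ?thesis
        by (simp only: cos_sin_eq)
    qed
    ultimately show ?thesis
      using cot_add_tan[OF sin_cos_pi_times_nonzero[OF Im(1)]] by (simp only: cos_minus)
  qed
  moreover have "of_real pi * (2 / cos (of_real pi * u / 2)) = 8 * (of_real pi / (4 * cos (of_real pi * u / 2)))"
    by simp
  ultimately have "(\<lambda>j. 8 * (of_nat (4*j+1) / (of_nat (4*j+1) ^ 2 - u^2) - of_nat (4*j+3) / (of_nat (4*j+3) ^ 2 - u^2)))
      sums (8 * (of_real pi / (4 * cos (of_real pi * u / 2))))"
    by (simp only:)
  then show ?thesis
    by (subst (asm) sums_mult_iff) simp_all
qed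

lemma sums_chi_div_diff_squares:
  fixes u :: complex
  assumes "Im u \<noteq> 0"
  shows "(\<lambda>n. of_int (chi (int n)) * (of_nat n / (of_nat n ^ 2 - u^2)))
           sums (of_real pi / (4 * cos (of_real pi * u / 2)))"
proof -
  define g where "g n = of_nat n / (of_nat n ^ 2 - u^2 :: complex)" for n
  define f where "f n = of_int (chi (int n)) * g n" for n
  have f0: "f \<longlonglongrightarrow> 0"
  proof (rule Lim_null_comparison[OF _ tendsto_norm_zero[OF tendsto_of_nat_div_diff_squares[of u]]])
    show "\<forall>\<^sub>F n in sequentially. norm (f n) \<le> norm (of_nat n / (of_nat n ^ 2 - u^2))"
      by (simp add: f_def g_def norm_mult chi_def)
  qed
  have "(\<lambda>j. f (2 * j)) \<longlonglongrightarrow> 0" "(\<lambda>j. f (2 * j + 1)) \<longlonglongrightarrow> 0"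
    by (rule LIMSEQ_subseq_LIMSEQ[OF f0, unfolded o_def]; simp add: strict_mono_def)+
  then have pairs0: "(\<lambda>j. f (2*j) + f (2*j+1)) \<longlonglongrightarrow> 0"
    using tendsto_add by fastforce
  have "f (2*(2*j)) + f (2*(2*j)+1) + (f (2*(2*j+1)) + f (2*(2*j+1)+1)) = g (4*j+1) - g (4*j+3)" for j
  proof -
    have "2*(2*j) = 4*j" "2*(2*j)+1 = 4*j+1" "2*(2*j+1) = 4*j+2" "2*(2*j+1)+1 = 4*j+3"
      by simp_all
    then show ?thesis
      by (simp only:) (simp add: f_def chi_def)
  qed
  then have "(\<lambda>j. f (2*(2*j)) + f (2*(2*j)+1) + (f (2*(2*j+1)) + f (2*(2*j+1)+1)))
      sums (of_real pi / (4 * cos (of_real pi * u / 2)))"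
    using sums_odd_alternating_div_diff_squares[OF assms] unfolding g_def by (simp only:)
  then show ?thesis
    using sums_of_pair_sums[OF f0 sums_of_pair_sums[OF pairs0]] by (simp add: f_def g_def)
qed

lemma cos_Complex: "cos (Complex x y) = Complex (cos x * cosh y) (- (sin x * sinh y))"
  by (simp add: complex_eq_iff Re_cos Im_cos cosh_def sinh_def field_simps)

lemma Re_Im_inverse_cos_Complex:
  "Re (inverse (cos (Complex x y))) = cosh y * cos x / (cosh y ^ 2 - sin x ^ 2)"
  "Im (inverse (cos (Complex x y))) = sinh y * sin x / (sinh y ^ 2 + cos x ^ 2)"
proof -
  have "(cos x * cosh y)^2 + (sin x * sinh y)^2 = cosh y ^ 2 - sin x ^ 2"
    by (simp add: power_mult_distrib sinh_square_eq cos_squared_eq algebra_simps)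
  moreover have "(cos x * cosh y)^2 + (sin x * sinh y)^2 = sinh y ^ 2 + cos x ^ 2"
    by (simp add: power_mult_distrib cosh_square_eq sin_squared_eq algebra_simps)
  ultimately show
    "Re (inverse (cos (Complex x y))) = cosh y * cos x / (cosh y ^ 2 - sin x ^ 2)"
    "Im (inverse (cos (Complex x y))) = sinh y * sin x / (sinh y ^ 2 + cos x ^ 2)"
    by (simp_all add: cos_Complex power2_eq_square mult.commute)
qed

lemma Afun_Bfun:
  assumes "c > 0"
  shows "Afun b c > 0" "Bfun b c > 0" "Afun b c ^ 2 - Bfun b c ^ 2 = b^2" "2 * Afun b c * Bfun b c = c"
proof -
  define s where "s = sqrt (b^4 + c^2)"
  have "sqrt ((b^2)^2) < s"
    unfolding s_def using assms by (intro real_sqrt_less_mono) (simp add: power_mult_distrib[symmetric])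
  moreover have "sqrt ((b^2)^2) = b^2"
    by (rule real_sqrt_unique) simp_all
  ultimately have s_gt: "b^2 < s"
    by simp
  then have s_pm: "0 < s + b^2" "0 < s - b^2"
    using zero_le_power2[of b] by linarith+
  have A2: "Afun b c ^ 2 = (s + b^2) / 2" and B2: "Bfun b c ^ 2 = (s - b^2) / 2"
    using s_pm unfolding Afun_def Bfun_def s_def[symmetric] by simp_all
  show "Afun b c > 0" "Bfun b c > 0"
    using s_pm unfolding Afun_def Bfun_def s_def[symmetric] by simp_all
  then show "Afun b c ^ 2 - Bfun b c ^ 2 = b^2"
    using A2 B2 by simp
  have "(2 * Afun b c * Bfun b c)^2 = s^2 - (b^2)^2"
    unfolding power_mult_distrib A2 B2 by (simp add: field_simps power2_eq_square)
  also have "\<dots> = c^2"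
    by (simp add: s_def power_mult_distrib[symmetric])
  finally show "2 * Afun b c * Bfun b c = c"
    using assms \<open>Afun b c > 0\<close> \<open>Bfun b c > 0\<close> by (simp add: power2_eq_iff_nonneg)
qed

lemma sums_chi_quartic_Re_Im:
  fixes A B :: real
  assumes "A \<noteq> 0" and "B \<noteq> 0"
  defines "X n \<equiv> real n ^ 2 + (A^2 - B^2)" and "Y \<equiv> 2 * A * B"
  shows "(\<lambda>n. of_int (chi (int n)) * real n / (X n ^ 2 + Y ^ 2)) sums
           (pi / (4 * Y) * (sinh (pi / 2 * A) * sin (pi / 2 * B))
              / (sinh (pi / 2 * A) ^ 2 + cos (pi / 2 * B) ^ 2))"
    and "(\<lambda>n. of_int (chi (int n)) * real n * X n / (X n ^ 2 + Y ^ 2)) sums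
           (pi / 4 * (cosh (pi / 2 * A) * cos (pi / 2 * B))
              / (cosh (pi / 2 * A) ^ 2 - sin (pi / 2 * B) ^ 2))"
proof -
  define p q where "p = pi / 2 * A" and "q = pi / 2 * B"
  define u where "u = Complex B (- A)"
  define F where "F = (\<lambda>n. of_int (chi (int n)) * (of_nat n / (of_nat n ^ 2 - u^2)))"
  define w where "w = inverse (cos (Complex q (- p)))"
  have den: "of_nat n ^ 2 - u^2 = Complex (X n) Y" for n
    by (simp add: X_def Y_def u_def power2_eq_square complex_eq_iff)
  have cos_arg: "of_real pi * u / 2 = Complex q (- p)"
    by (simp add: u_def p_def q_def complex_eq_iff)
  have "Im u \<noteq> 0"
    using \<open>A \<noteq> 0\<close> by (simp add: u_def)
  from sums_chi_div_diff_squares[OF this] have "F sums (of_real pi / (4 * cos (Complex q (- p))))"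
    unfolding F_def cos_arg .
  moreover have "of_real pi / (4 * cos (Complex q (- p))) = of_real (pi / 4) * w"
    unfolding w_def of_real_divide divide_inverse inverse_mult_distrib by simp
  ultimately have "F sums (of_real (pi / 4) * w)"
    by simp
  then have re: "(\<lambda>n. Re (F n)) sums (pi / 4 * Re w)" and im: "(\<lambda>n. Im (F n)) sums (pi / 4 * Im w)"
    by (simp_all add: sums_complex_iff)
  have "Re (F n) = of_int (chi (int n)) * real n * X n / (X n ^ 2 + Y ^ 2)"
      "Im (F n) = - Y * (of_int (chi (int n)) * real n / (X n ^ 2 + Y ^ 2))" for n
    unfolding F_def by (simp_all add: den Re_divide Im_divide)
  moreover have "Re w = cosh p * cos q / (cosh p ^ 2 - sin q ^ 2)"
      "Im w = - (sinh p * sin q / (sinh p ^ 2 + cos q ^ 2))"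
    unfolding w_def Re_Im_inverse_cos_Complex by simp_all
  moreover have "Y \<noteq> 0"
    using assms by (simp add: Y_def)
  ultimately have "(\<lambda>n. - Y * (of_int (chi (int n)) * real n / (X n ^ 2 + Y ^ 2)))
        sums (- Y * (pi / (4 * Y) * (sinh p * sin q) / (sinh p ^ 2 + cos q ^ 2)))"
    and re': "(\<lambda>n. of_int (chi (int n)) * real n * X n / (X n ^ 2 + Y ^ 2))
        sums (pi / 4 * (cosh p * cos q) / (cosh p ^ 2 - sin q ^ 2))"
    using re im by simp_all
  from this(1) \<open>Y \<noteq> 0\<close> have im': "(\<lambda>n. of_int (chi (int n)) * real n / (X n ^ 2 + Y ^ 2))
        sums (pi / (4 * Y) * (sinh p * sin q) / (sinh p ^ 2 + cos q ^ 2))"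
    by (subst (asm) sums_mult_iff) simp_all
  from im' show "(\<lambda>n. of_int (chi (int n)) * real n / (X n ^ 2 + Y ^ 2))
        sums (pi / (4 * Y) * (sinh (pi / 2 * A) * sin (pi / 2 * B)) / (sinh (pi / 2 * A) ^ 2 + cos (pi / 2 * B) ^ 2))"
    unfolding p_def q_def .
  from re' show "(\<lambda>n. of_int (chi (int n)) * real n * X n / (X n ^ 2 + Y ^ 2))
        sums (pi / 4 * (cosh (pi / 2 * A) * cos (pi / 2 * B)) / (cosh (pi / 2 * A) ^ 2 - sin (pi / 2 * B) ^ 2))"
    unfolding p_def q_def .
qed

theorem lemma2p1:
  fixes b c :: real
  assumes "b > 0" and "c > 0"
  shows "(\<lambda>n::nat. of_int (chi (int n)) * real n / ((real n ^ 2 + b^2)^2 + c^2)) sums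
           (pi / (4 * c) * (sinh (pi / 2 * Afun b c) * sin (pi / 2 * Bfun b c))
              / (sinh (pi / 2 * Afun b c) ^ 2 + cos (pi / 2 * Bfun b c) ^ 2))
       \<and> (\<lambda>n::nat. of_int (chi (int n)) * real n * (real n ^ 2 + b^2) / ((real n ^ 2 + b^2)^2 + c^2)) sums
           (pi / 4 * (cosh (pi / 2 * Afun b c) * cos (pi / 2 * Bfun b c))
              / (cosh (pi / 2 * Afun b c) ^ 2 - sin (pi / 2 * Bfun b c) ^ 2))"
proof -
  have nonzero: "Afun b c \<noteq> 0" "Bfun b c \<noteq> 0"
    using Afun_Bfun(1,2)[OF \<open>c > 0\<close>, where b = b] by simp_all
  note AB = Afun_Bfun(3,4)[OF \<open>c > 0\<close>, where b = b]
  from sums_chi_quartic_Re_Im[OF nonzero, unfolded AB] show ?thesis ..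
qed

end
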